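(* Let $k\in\mathbb{Z}$ and let $p,s$ be positive integers with $s<p$. Then $$\sum_{\nu=0}^{p}\binom{p-\nu+1}{s}\binom{p}{\nu}E_{\nu}^{(k)}=\binom{p}{s}E_{p-s}^{(k)}(1)+\binom{p}{s-1}E_{p-s+1}^{(k)}(1).$$
   Context: For $k\in\mathbb{Z}$, $\mathrm{Ei}_k(x)=\sum_{n=1}^{\infty}\frac{x^n}{n^k(n-1)!}$; the poly-Genocchi polynomials $G_n^{(k)}(x)$ are defined by $\frac{2\,\mathrm{Ei}_k(\log(1+t))}{e^t+1}e^{xt}=\sum_{n=0}^{\infty}G_n^{(k)}(x)\frac{t^n}{n!}$; the poly-Euler polynomials are $E_n^{(k)}(x)=\frac{G_{n+1}^{(k)}(x)}{n+1}$ ($n\ge0$), and $E_n^{(k)}=E_n^{(k)}(0)$. *)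

theory Defs
  imports "HOL-Computational_Algebra.Formal_Power_Series"
begin

definition Ei_fps :: "int \<Rightarrow> real fps" where
  "Ei_fps k = Abs_fps (\<lambda>n. if n = 0 then 0 else 1 / ((real n) powi k * fact (n - 1)))"

text \<open>Generating function 2 Ei_k(log(1+t)) / (e^t + 1) * e^(x t); fps_ln 1 is log(1+t).\<close>
definition polyGenocchi_gf :: "int \<Rightarrow> real \<Rightarrow> real fps" where
  "polyGenocchi_gf k x =
     fps_const 2 * (Ei_fps k oo fps_ln 1) * inverse (fps_exp 1 + 1) * fps_exp x"

definition polyGenocchi :: "int \<Rightarrow> nat \<Rightarrow> real \<Rightarrow> real" where
  "polyGenocchi k n x = fact n * fps_nth (polyGenocchi_gf k x) n"

definition polyEuler :: "int \<Rightarrow> nat \<Rightarrow> real \<Rightarrow> real" where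
  "polyEuler k n x = polyGenocchi k (n + 1) x / real (n + 1)"

end

theory Submission
  imports Defs
begin

text \<open>The generating function of the poly-Genocchi polynomials is a series independent of x
  times e^(xt), so they and the poly-Euler polynomials form Appell sequences; in particular
  E_m(1) = sum_j (m choose j) E_j. Expanding both values at 1 on the right-hand side in this way,
  the coefficient of E_j becomes (p choose s) (p-s choose j) + (p choose s-1) (p-s+1 choose j).
  The symmetry (p choose a) (p-a choose b) = (p choose b) (p-b choose a) of trinomial coefficients
  and Pascal's rule turn it into (p choose j) (p-j+1 choose s).\<close>

lemma fact_mult_fps_nth_mult_exp:
  fixes F :: "'a::field_char_0 fps"
  shows "fact n * fps_nth (F * fps_exp x) n
           = (\<Sum>i\<le>n. of_nat (n choose i) * x ^ (n - i) * (fact i * fps_nth F i))"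
  unfolding fps_mult_nth fps_exp_nth atLeast0AtMost sum_distrib_left
  by (intro sum.cong) (auto simp: binomial_fact)

lemma polyGenocchi_gf_eq: "polyGenocchi_gf k x = polyGenocchi_gf k 0 * fps_exp x"
proof -
  have "fps_exp (0::real) = 1"
    by (rule fps_ext) (simp add: power_0_left)
  then show ?thesis
    unfolding polyGenocchi_gf_def by (simp add: mult.assoc)
qed

lemma polyGenocchi_0: "polyGenocchi k 0 x = 0"
  unfolding polyGenocchi_def polyGenocchi_gf_def by (simp add: Ei_fps_def)

lemma polyGenocchi_appell:
  "polyGenocchi k n x = (\<Sum>i\<le>n. real (n choose i) * x ^ (n - i) * polyGenocchi k i 0)"
  unfolding polyGenocchi_def
  by (subst polyGenocchi_gf_eq) (rule fact_mult_fps_nth_mult_exp)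

lemma polyEuler_appell:
  "polyEuler k n x = (\<Sum>j\<le>n. real (n choose j) * x ^ (n - j) * polyEuler k j 0)"
proof -
  have "polyGenocchi k (Suc n) x
      = (\<Sum>j\<le>n. real (Suc n choose Suc j) * x ^ (n - j) * polyGenocchi k (Suc j) 0)"
    unfolding polyGenocchi_appell[of k "Suc n"] sum.atMost_Suc_shift polyGenocchi_0 by simp
  also have "\<dots> = real (Suc n) * (\<Sum>j\<le>n. real (n choose j) * x ^ (n - j) * polyEuler k j 0)"
    unfolding sum_distrib_left
  proof (rule sum.cong[OF refl])
    fix j
    have "real (Suc n choose Suc j) = real (Suc n) * real (n choose j) / real (j + 1)"
      by (metis Suc_eq_plus1 Suc_times_binomial_eq of_nat_mult eq_divide_eq of_nat_neq_0 nat.distinct(1))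
    then show "real (Suc n choose Suc j) * x ^ (n - j) * polyGenocchi k (Suc j) 0
        = real (Suc n) * (real (n choose j) * x ^ (n - j) * polyEuler k j 0)"
      unfolding polyEuler_def by simp
  qed
  finally show ?thesis
    unfolding polyEuler_def by simp
qed

lemma choose_mult_swap: "(n choose a) * ((n - a) choose b) = (n choose b) * ((n - b) choose a)"
proof (cases "a + b \<le> n")
  case True
  have "(n choose a) * ((n - a) choose b) = (n choose (a + b)) * ((a + b) choose a)"
    using choose_mult[of a "a + b" n] True by simp
  also have "\<dots> = (n choose (a + b)) * ((a + b) choose b)"
    by (metis binomial_symmetric le_add1 add_diff_cancel_left')
  also have "\<dots> = (n choose b) * ((n - b) choose a)"
    using choose_mult[of b "a + b" n] True by simp
  finally show ?thesis .
next
  case False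
  then have "n < a \<or> n - a < b" and "n < b \<or> n - b < a"
    by linarith+
  then show ?thesis
    by (auto simp: binomial_eq_0)
qed

lemma choose_mult_Pascal:
  "(n choose Suc t) * ((n - Suc t) choose j) + (n choose t) * ((n - t) choose j)
     = (Suc (n - j) choose Suc t) * (n choose j)"
proof -
  have "(n choose Suc t) * ((n - Suc t) choose j) + (n choose t) * ((n - t) choose j)
      = (n choose j) * ((n - j) choose Suc t) + (n choose j) * ((n - j) choose t)"
    by (simp only: choose_mult_swap[of n "Suc t" j] choose_mult_swap[of n t j])
  also have "\<dots> = (n choose j) * (Suc (n - j) choose Suc t)"
    by (simp add: add_mult_distrib2)
  finally show ?thesis
    by (simp only: mult.commute)
qed

theorem lemma8:
  fixes k :: int and p s :: nat
  assumes "0 < p" and "0 < s" and "s < p"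
  shows "(\<Sum>\<nu>=0..p. real ((p - \<nu> + 1) choose s) * real (p choose \<nu>) * polyEuler k \<nu> 0)
       = real (p choose s) * polyEuler k (p - s) 1
         + real (p choose (s - 1)) * polyEuler k (p - s + 1) 1"
proof -
  obtain t where s: "s = Suc t"
    using assms by (cases s) auto
  with assms have "p - Suc t + 1 = p - t"
    by simp
  have polyEuler_1: "polyEuler k n 1 = (\<Sum>j\<le>p. real (n choose j) * polyEuler k j 0)"
    if "n \<le> p" for n
    unfolding polyEuler_appell[of k n] power_one mult_1_right
    by (rule sum.mono_neutral_left) (use that in auto)
  have "real (p choose s) * polyEuler k (p - s) 1 + real (p choose (s - 1)) * polyEuler k (p - s + 1) 1
      = (\<Sum>j\<le>p. real ((p choose Suc t) * ((p - Suc t) choose j) + (p choose t) * ((p - t) choose j))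
                  * polyEuler k j 0)"
    unfolding s diff_Suc_1 \<open>p - Suc t + 1 = p - t\<close>
    by (simp add: polyEuler_1 sum_distrib_left sum.distrib[symmetric] distrib_right mult.assoc)
  also have "\<dots> = (\<Sum>j\<le>p. real ((p - j + 1) choose s) * real (p choose j) * polyEuler k j 0)"
    unfolding choose_mult_Pascal s by simp
  finally show ?thesis
    by (simp add: atLeast0AtMost)
qed

end
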